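(* Consider an $a\times b$ grid of unit cells with $\ell = a+b$ a power of two, and any monotone path $\gamma$ through the grid. Then the region under $\gamma$ can be decomposed into disjoint axis-parallel rectangles (each a union of grid cells) such that the sum of the perimeters of these rectangles is $O(\ell\log \ell)$.
   Context: A monotone path is a path along grid lines from the bottom-left corner to the top-right corner of the grid that only moves up or right. The region under $\gamma$ is the set of grid cells lying below (equivalently, to the lower right of) $\gamma$. *)

theory Defs
  imports Main "HOL.Transcendental"
begin

text \<open>Grid: cell (i,j) is the unit square [i,i+1] x [j,j+1], with 0 <= i < a (column)
and 0 <= j < b (row). A monotone path from (0,0) to (a,b) is a list of unit steps,
True = right step, False = up step.\<close>

type_synonym cell = "nat \<times> nat"

definition monotone_path :: "nat \<Rightarrow> nat \<Rightarrow> bool list \<Rightarrow> bool" where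
  "monotone_path a b p \<longleftrightarrow> length p = a + b \<and> length (filter id p) = a"

text \<open>The k-th step, if it is a right step, traverses column (number of right steps before k)
at height (number of up steps before k); the cells of that column strictly below this height
lie under the path.\<close>

definition region_under :: "nat \<Rightarrow> nat \<Rightarrow> bool list \<Rightarrow> cell set" where
  "region_under a b p = {(i, j). i < a \<and> j < b \<and>
     (\<exists>k < length p. p ! k \<and> length (filter id (take k p)) = i
                      \<and> j < length (filter Not (take k p)))}"

type_synonym rect = "nat \<times> nat \<times> nat \<times> nat"

definition rect_cells :: "rect \<Rightarrow> cell set" where
  "rect_cells r = (case r of (x0, x1, y0, y1) \<Rightarrow> {x0..<x1} \<times> {y0..<y1})"

definition rect_nonempty :: "rect \<Rightarrow> bool" where
  "rect_nonempty r = (case r of (x0, x1, y0, y1) \<Rightarrow> x0 < x1 \<and> y0 < y1)"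

definition perimeter :: "rect \<Rightarrow> nat" where
  "perimeter r = (case r of (x0, x1, y0, y1) \<Rightarrow> 2 * ((x1 - x0) + (y1 - y0)))"

definition rect_decomposition :: "rect set \<Rightarrow> cell set \<Rightarrow> bool" where
  "rect_decomposition R S \<longleftrightarrow> finite R \<and> (\<forall>r\<in>R. rect_nonempty r)
     \<and> (\<forall>r\<in>R. \<forall>s\<in>R. r \<noteq> s \<longrightarrow> rect_cells r \<inter> rect_cells s = {})
     \<and> (\<Union>r\<in>R. rect_cells r) = S"

end

theory Submission
  imports Defs
begin

text \<open>The region under a monotone path is a staircase: the cells \<open>(i, j)\<close> with \<open>i < a\<close> and
\<open>j < f i\<close> for a nondecreasing profile \<open>f \<le> b\<close>. Cut the columns dyadically. On a block of
width \<open>2^(n+1)\<close> above a floor \<open>y0\<close>, decompose the left half recursively, take one rectangle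
over the right half from \<open>y0\<close> up to the value of \<open>f\<close> at its first column, and decompose the
right half recursively above that height. By induction the total perimeter on a block of
width \<open>2^n\<close> is at most \<open>2(n+1)(2^n + h)\<close>, where \<open>h\<close> is the rise of \<open>f\<close> over the block above
the floor: the rises of the two halves add up to at most that of the whole block. With
\<open>h \<le> b \<le> 2^k = a + b\<close> this is \<open>4(k+1)2^k\<close>.\<close>

lemma length_filter_take_mono:
  "k \<le> k' \<Longrightarrow> length (filter P (take k xs)) \<le> length (filter P (take k' xs))"
  by (metis append_take_drop_id filter_append le_add1 length_append min.absorb1 take_take)

lemma ex_nth_true_with_count:
  "i < length (filter id p) \<Longrightarrow> \<exists>k<length p. p ! k \<and> length (filter id (take k p)) = i"
proof (induction p arbitrary: i)
  case Nil
  then show ?case by simp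
next
  case (Cons x p)
  show ?case
  proof (cases "x \<and> i = 0")
    case True
    then show ?thesis by (intro exI[of _ 0]) simp
  next
    case False
    then have "(if x then i - 1 else i) < length (filter id p)"
      using Cons.prems by (auto simp: id_def)
    from Cons.IH[OF this] obtain k where
      "k < length p" "p ! k" "length (filter id (take k p)) = (if x then i - 1 else i)" by blast
    then show ?thesis using False by (intro exI[of _ "Suc k"]) (auto simp: id_def)
  qed
qed

lemma region_under_bounded: "(i, j) \<in> region_under a b p \<Longrightarrow> i < a \<and> j < b"
  unfolding region_under_def by auto

lemma region_under_down_closed:
  "(i, j) \<in> region_under a b p \<Longrightarrow> j' \<le> j \<Longrightarrow> (i, j') \<in> region_under a b p"
  unfolding region_under_def by fastforce

lemma region_under_right_closed:
  assumes p: "monotone_path a b p" and ij: "(i, j) \<in> region_under a b p"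
    and "i \<le> i'" "i' < a"
  shows "(i', j) \<in> region_under a b p"
proof (cases "i = i'")
  case True
  with ij show ?thesis by simp
next
  case False
  from ij obtain k where k: "p ! k" "length (filter id (take k p)) = i"
    "j < length (filter Not (take k p))" and "j < b"
    unfolding region_under_def by auto
  from p \<open>i' < a\<close> have "i' < length (filter id p)"
    unfolding monotone_path_def by simp
  from ex_nth_true_with_count[OF this] obtain k' where
    k': "k' < length p" "p ! k'" "length (filter id (take k' p)) = i'" by blast
  have "k \<le> k'"
    using k(2) k'(3) \<open>i \<le> i'\<close> False length_filter_take_mono[of k' k id p] by linarith
  then have "j < length (filter Not (take k' p))"
    using k(3) length_filter_take_mono[of k k' Not p] by linarith
  then show ?thesis
    using k' \<open>j < b\<close> \<open>i' < a\<close> unfolding region_under_def by auto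
qed

lemma down_right_closed_eq_staircase:
  fixes A :: "cell set"
  assumes bounded: "\<And>i j. (i, j) \<in> A \<Longrightarrow> i < a \<and> j < b"
    and down: "\<And>i j j'. (i, j) \<in> A \<Longrightarrow> j' \<le> j \<Longrightarrow> (i, j') \<in> A"
    and right: "\<And>i j i'. (i, j) \<in> A \<Longrightarrow> i \<le> i' \<Longrightarrow> i' < a \<Longrightarrow> (i', j) \<in> A"
  obtains f where "mono f" "\<And>i. f i \<le> b" "A = {(i, j). i < a \<and> j < f i}"
proof
  define f where "f i = (if i < a then LEAST j. (i, j) \<notin> A else b)" for i
  have top_out: "(i, b) \<notin> A" for i
    using bounded by blast
  show f_le: "f i \<le> b" for i
    unfolding f_def using top_out by (auto intro: Least_le)
  show A_eq: "A = {(i, j). i < a \<and> j < f i}"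
  proof (intro set_eqI iffI; clarify)
    fix i j assume ij: "(i, j) \<in> A"
    have "(i, LEAST j. (i, j) \<notin> A) \<notin> A"
      using top_out by (rule LeastI)
    with ij down have "j < (LEAST j. (i, j) \<notin> A)"
      using not_le by blast
    with ij bounded show "i < a \<and> j < f i"
      unfolding f_def by simp
  next
    fix i j assume "i < a" "j < f i"
    then show "(i, j) \<in> A"
      unfolding f_def using not_less_Least[of j "\<lambda>j. (i, j) \<notin> A"] by auto
  qed
  show "mono f"
  proof (rule monoI)
    fix i i' :: nat assume "i \<le> i'"
    show "f i \<le> f i'"
    proof (cases "i' < a")
      case True
      have "(i', f i') \<notin> A" using A_eq by simp
      then have "(i, f i') \<notin> A" using right \<open>i \<le> i'\<close> True by blast
      then show ?thesis using \<open>i \<le> i'\<close> True unfolding f_def by (auto intro: Least_le)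
    next
      case False
      then show ?thesis using f_le by (simp add: f_def)
    qed
  qed
qed

lemma region_under_eq_staircase:
  assumes "monotone_path a b p"
  obtains f where "mono f" "\<And>i. f i \<le> b" "region_under a b p = {(i, j). i < a \<and> j < f i}"
  using down_right_closed_eq_staircase[of "region_under a b p" a b]
    region_under_bounded region_under_down_closed region_under_right_closed[OF assms]
  by blast

definition staircase_part :: "(nat \<Rightarrow> nat) \<Rightarrow> nat \<Rightarrow> nat \<Rightarrow> nat \<Rightarrow> nat \<Rightarrow> cell set" where
  "staircase_part f a x0 x1 y0 = {(i, j). x0 \<le> i \<and> i < x1 \<and> i < a \<and> y0 \<le> j \<and> j < f i}"

definition block_rect :: "(nat \<Rightarrow> nat) \<Rightarrow> nat \<Rightarrow> nat \<Rightarrow> nat \<Rightarrow> nat \<Rightarrow> rect set" where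
  "block_rect f a x w y0 =
     (if rect_nonempty (x, min (x + w) a, y0, f x) then {(x, min (x + w) a, y0, f x)} else {})"

fun dyadic_rects :: "(nat \<Rightarrow> nat) \<Rightarrow> nat \<Rightarrow> nat \<Rightarrow> nat \<Rightarrow> nat \<Rightarrow> rect set" where
  "dyadic_rects f a 0 x0 y0 = block_rect f a x0 1 y0"
| "dyadic_rects f a (Suc n) x0 y0 =
     dyadic_rects f a n x0 y0 \<union> block_rect f a (x0 + 2^n) (2^n) y0
     \<union> dyadic_rects f a n (x0 + 2^n) (max y0 (f (x0 + 2^n)))"

lemma finite_block_rect: "finite (block_rect f a x w y0)"
  by (simp add: block_rect_def)

lemma finite_dyadic_rects: "finite (dyadic_rects f a n x0 y0)"
  by (induction n arbitrary: x0 y0) (simp_all add: finite_block_rect)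

lemma block_rect_cells:
  "(\<Union>r\<in>block_rect f a x w y0. rect_cells r) = {x..<min (x + w) a} \<times> {y0..<f x}"
  by (auto simp: block_rect_def rect_nonempty_def rect_cells_def)

lemma staircase_part_split_columns:
  "x0 \<le> m \<Longrightarrow> staircase_part f a x0 (m + w) y0 = staircase_part f a x0 m y0 \<union> staircase_part f a m (m + w) y0"
  by (auto simp: staircase_part_def)

lemma staircase_part_split_rows:
  assumes "mono f"
  shows "staircase_part f a m (m + w) y0 =
    {m..<min (m + w) a} \<times> {y0..<f m} \<union> staircase_part f a m (m + w) (max y0 (f m))"
  using monoD[OF assms] by (fastforce simp: staircase_part_def intro: less_le_trans)

lemma dyadic_rects_cells:
  assumes "mono f"
  shows "(\<Union>r\<in>dyadic_rects f a n x0 y0. rect_cells r) = staircase_part f a x0 (x0 + 2^n) y0"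
proof (induction n arbitrary: x0 y0)
  case 0
  show ?case by (auto simp: block_rect_cells staircase_part_def less_Suc_eq)
next
  case (Suc n)
  let ?m = "x0 + 2^n"
  have "staircase_part f a x0 (x0 + 2^Suc n) y0 =
      staircase_part f a x0 ?m y0 \<union> staircase_part f a ?m (?m + 2^n) y0"
    using staircase_part_split_columns[of x0 ?m f a "2^n" y0] by (simp add: add.assoc mult_2)
  then show ?case
    using staircase_part_split_rows[OF assms, of a ?m "2^n" y0]
    by (simp add: Suc.IH block_rect_cells Un_assoc)
qed

lemma pairwise_disjnt_image_Un:
  assumes "pairwise (\<lambda>x y. disjnt (g x) (g y)) A" "pairwise (\<lambda>x y. disjnt (g x) (g y)) B"
    and "disjnt (\<Union>x\<in>A. g x) (\<Union>y\<in>B. g y)"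
  shows "pairwise (\<lambda>x y. disjnt (g x) (g y)) (A \<union> B)"
  using assms unfolding pairwise_def disjnt_def by blast

lemma dyadic_rects_disjoint:
  assumes "mono f"
  shows "pairwise (\<lambda>r s. disjnt (rect_cells r) (rect_cells s)) (dyadic_rects f a n x0 y0)"
proof (induction n arbitrary: x0 y0)
  case 0
  show ?case by (simp add: block_rect_def)
next
  case (Suc n)
  let ?m = "x0 + 2^n"
  let ?right = "block_rect f a ?m (2^n) y0 \<union> dyadic_rects f a n ?m (max y0 (f ?m))"
  have "disjnt (\<Union>r\<in>block_rect f a ?m (2^n) y0. rect_cells r)
      (\<Union>r\<in>dyadic_rects f a n ?m (max y0 (f ?m)). rect_cells r)"
    unfolding block_rect_cells dyadic_rects_cells[OF assms]
    by (auto simp: disjnt_def staircase_part_def)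
  then have right_half: "pairwise (\<lambda>r s. disjnt (rect_cells r) (rect_cells s)) ?right"
    by (intro pairwise_disjnt_image_Un Suc.IH) (simp add: block_rect_def)
  have right_cells: "(\<Union>r\<in>?right. rect_cells r) = staircase_part f a ?m (?m + 2^n) y0"
    using staircase_part_split_rows[OF assms, of a ?m "2^n" y0]
    by (simp add: dyadic_rects_cells[OF assms] block_rect_cells)
  have "disjnt (\<Union>r\<in>dyadic_rects f a n x0 y0. rect_cells r) (\<Union>r\<in>?right. rect_cells r)"
    unfolding right_cells dyadic_rects_cells[OF assms]
    by (auto simp: disjnt_def staircase_part_def)
  then have "pairwise (\<lambda>r s. disjnt (rect_cells r) (rect_cells s)) (dyadic_rects f a n x0 y0 \<union> ?right)"
    by (intro pairwise_disjnt_image_Un Suc.IH right_half)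
  then show ?case by (simp only: dyadic_rects.simps Un_assoc)
qed

lemma dyadic_rects_decomposition:
  assumes "mono f"
  shows "rect_decomposition (dyadic_rects f a n x0 y0) (staircase_part f a x0 (x0 + 2^n) y0)"
  unfolding rect_decomposition_def
proof (intro conjI)
  show "finite (dyadic_rects f a n x0 y0)"
    by (rule finite_dyadic_rects)
  show "\<forall>r\<in>dyadic_rects f a n x0 y0. rect_nonempty r"
    by (induction n arbitrary: x0 y0) (auto simp: block_rect_def)
  show "\<forall>r\<in>dyadic_rects f a n x0 y0. \<forall>s\<in>dyadic_rects f a n x0 y0.
      r \<noteq> s \<longrightarrow> rect_cells r \<inter> rect_cells s = {}"
    using dyadic_rects_disjoint[OF assms] unfolding pairwise_def disjnt_def by blast
qed (rule dyadic_rects_cells[OF assms])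

lemma block_rect_perimeter:
  "(\<Sum>r\<in>block_rect f a x w y0. perimeter r) \<le> 2 * (w + (f x - y0))"
  by (auto simp: block_rect_def perimeter_def)

lemma sum_Un_le_nat:
  fixes g :: "'a \<Rightarrow> nat"
  shows "finite A \<Longrightarrow> finite B \<Longrightarrow> sum g (A \<union> B) \<le> sum g A + sum g B"
  by (simp add: sum_Un_nat)

lemma dyadic_rects_perimeter:
  assumes "mono f"
  shows "(\<Sum>r\<in>dyadic_rects f a n x0 y0. perimeter r) \<le> 2 * (n + 1) * (2^n + (f (x0 + 2^n - 1) - y0))"
proof (induction n arbitrary: x0 y0)
  case 0
  show ?case using block_rect_perimeter[of f a x0 1 y0] by simp
next
  case (Suc n)
  let ?m = "x0 + 2^n"
  let ?L = "dyadic_rects f a n x0 y0"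
  let ?Q = "block_rect f a ?m (2^n) y0"
  let ?R = "dyadic_rects f a n ?m (max y0 (f ?m))"
  define rise_left where "rise_left = f (x0 + 2^n - 1) - y0"
  define rise_right where "rise_right = f (?m + 2^n - 1) - max y0 (f ?m)"
  define rise_mid where "rise_mid = f ?m - y0"
  define rise where "rise = f (?m + 2^n - 1) - y0"
  have "f (x0 + 2^n - 1) \<le> f ?m"
    by (rule monoD[OF assms]) simp
  moreover have "f ?m \<le> f (?m + 2^n - 1)"
    by (rule monoD[OF assms]) (use zero_less_power[of "2::nat" n] in linarith)
  ultimately have rises: "rise_left + rise_right \<le> rise" "rise_mid \<le> rise"
    unfolding rise_left_def rise_right_def rise_mid_def rise_def by (auto simp: max_def)
  have "(\<Sum>r\<in>?L \<union> ?Q \<union> ?R. perimeter r) \<le> sum perimeter ?L + sum perimeter ?Q + sum perimeter ?R"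
    using sum_Un_le_nat[of "?L \<union> ?Q" ?R perimeter] sum_Un_le_nat[of ?L ?Q perimeter]
    by (simp add: finite_dyadic_rects finite_block_rect)
  also have "\<dots> \<le> 2 * (n + 1) * (2^n + rise_left) + 2 * (2^n + rise_mid) + 2 * (n + 1) * (2^n + rise_right)"
    using Suc.IH[of x0 y0] Suc.IH[of ?m "max y0 (f ?m)"] block_rect_perimeter[of f a ?m "2^n" y0]
    unfolding rise_left_def rise_right_def rise_mid_def by linarith
  also have "\<dots> \<le> 2 * (Suc n + 1) * (2^Suc n + rise)"
    using rises mult_le_mono2[OF rises(1), of "n + 1"] by (simp add: algebra_simps)
  finally show ?case unfolding rise_def by (simp add: mult_2 add.assoc)
qed

lemma staircase_rect_decomposition:
  assumes "mono f" "a \<le> 2^k"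
  shows "\<exists>R. rect_decomposition R {(i, j). i < a \<and> j < f i}
    \<and> (\<Sum>r\<in>R. perimeter r) \<le> 2 * (k + 1) * (2^k + f (2^k - 1))"
proof -
  have "{(i, j). i < a \<and> j < f i} = staircase_part f a 0 (0 + 2^k) 0"
    using assms(2) by (auto simp: staircase_part_def)
  then show ?thesis
    using dyadic_rects_decomposition[OF assms(1), of a k 0 0]
      dyadic_rects_perimeter[OF assms(1), of a k 0 0]
    by auto
qed

lemma region_under_rect_decomposition:
  assumes "monotone_path a b p" "a + b = 2^k"
  shows "\<exists>R. rect_decomposition R (region_under a b p)
    \<and> (\<Sum>r\<in>R. perimeter r) \<le> 4 * (k + 1) * 2^k"
proof -
  obtain f where f: "mono f" "\<And>i. f i \<le> b"
    and region: "region_under a b p = {(i, j). i < a \<and> j < f i}"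
    using region_under_eq_staircase[OF assms(1)] by blast
  have "f (2^k - 1) \<le> 2^k"
    using f(2)[of "2^k - 1"] assms(2) by linarith
  then have "2 * (k + 1) * (2^k + f (2^k - 1)) \<le> 4 * (k + 1) * 2^k"
    using mult_le_mono2[of "2^k + f (2^k - 1)" "2^k + 2^k" "2 * (k + 1)"] by (simp add: algebra_simps)
  moreover have "a \<le> 2^k"
    using assms(2) by simp
  ultimately show ?thesis
    using staircase_rect_decomposition[OF f(1)] unfolding region by (meson order.trans)
qed

theorem mainTheorem4:
  shows "\<exists>C::real. \<forall>a b :: nat. \<forall>\<gamma> :: bool list.
           (\<exists>k::nat. a + b = 2 ^ k) \<longrightarrow> monotone_path a b \<gamma> \<longrightarrow>
           (\<exists>R. rect_decomposition R (region_under a b \<gamma>) \<and>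
                real (\<Sum>r\<in>R. perimeter r) \<le> C * real (a + b) * log 2 (real (a + b)))"
proof (intro exI[of _ 8] allI impI)
  fix a b :: nat and \<gamma> :: "bool list"
  assume "\<exists>k::nat. a + b = 2 ^ k" and path: "monotone_path a b \<gamma>"
  then obtain k where k: "a + b = 2^k" by blast
  have log: "log 2 (real (a + b)) = real k"
    unfolding k by (simp add: log_nat_power)
  show "\<exists>R. rect_decomposition R (region_under a b \<gamma>) \<and>
      real (\<Sum>r\<in>R. perimeter r) \<le> 8 * real (a + b) * log 2 (real (a + b))"
  proof (cases "k = 0")
    case True
    with k have "region_under a b \<gamma> = {}"
      using region_under_bounded by (fastforce simp: add_is_1)
    then show ?thesis using log by (intro exI[of _ "{}"]) (simp add: rect_decomposition_def)
  next
    case False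
    obtain R where R: "rect_decomposition R (region_under a b \<gamma>)"
      and R_perimeter: "(\<Sum>r\<in>R. perimeter r) \<le> 4 * (k + 1) * 2^k"
      using region_under_rect_decomposition[OF path k] by blast
    note R_perimeter
    also have "\<dots> \<le> 8 * 2^k * k"
      using False by (simp add: algebra_simps)
    finally have "real (\<Sum>r\<in>R. perimeter r) \<le> 8 * real (a + b) * real k"
      unfolding k by (metis of_nat_le_iff of_nat_mult of_nat_numeral)
    with R show ?thesis
      unfolding log by blast
  qed
qed

end
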